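(* Let $m>n$, $1<p<\infty$, $Y^m=[0,1)^m$, and let $\mathbf{R}\in\mathbb{R}^{m\times n}$ satisfy $\mathbf{R}^*k\neq0$ for all $k\in\mathbb{Z}^m\setminus\{0\}$. Then $$\mathcal{G}^p_{\mathbf{R}}:=\{w\in L^p_\#(Y^m;\mathbb{R}^n):\ \hat w_k=\lambda_k\mathbf{R}^*k\ \text{for all } k\in\mathbb{Z}^m, \text{ for some } \{\lambda_k\}_{k\in\mathbb{Z}^m}\subset\mathbb{C}\text{ with }\lambda_0=0\}$$ is a closed linear subspace of $L^p_\#(Y^m;\mathbb{R}^n)$, where $\hat w_k:=\int_{Y^m}w(y)e^{-2\pi ik\cdot y}\,dy$.
   Context: $L^p_\#(Y^m;\mathbb{R}^n)$ denotes the $Y^m$-periodic functions in $L^p_{\rm loc}(\mathbb{R}^m;\mathbb{R}^n)$, with the $L^p(Y^m)$ norm; $\mathbf{R}^*$ is the transpose of $\mathbf{R}$. *)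

theory Defs
  imports "HOL-Analysis.Analysis"
begin

definition int_vec :: "real ^ 'm \<Rightarrow> bool" where
  "int_vec k \<longleftrightarrow> (\<forall>i. k $ i \<in> \<int>)"

definition unit_cell :: "(real ^ 'm) set" where
  "unit_cell = {y. \<forall>i. 0 \<le> y $ i \<and> y $ i < 1}"

text \<open>Y^m-periodic functions in L^p_loc(R^m;R^n) (represented by a periodic,
  Lebesgue-measurable representative with finite L^p(Y^m) norm).\<close>
definition Lp_per :: "real \<Rightarrow> (real ^ 'm \<Rightarrow> real ^ 'n) set" where
  "Lp_per p = {w. w \<in> borel_measurable lebesgue
     \<and> (\<forall>y z. int_vec z \<longrightarrow> w (y + z) = w y)
     \<and> set_integrable lebesgue unit_cell (\<lambda>y. norm (w y) powr p)}"

definition Lp_dist :: "real \<Rightarrow> (real ^ 'm \<Rightarrow> real ^ 'n) \<Rightarrow> (real ^ 'm \<Rightarrow> real ^ 'n) \<Rightarrow> real" where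
  "Lp_dist p u v = (LINT y:unit_cell|lebesgue. norm (u y - v y) powr p) powr (1 / p)"

definition fourier_coeff :: "(real ^ 'm \<Rightarrow> real ^ 'n) \<Rightarrow> real ^ 'm \<Rightarrow> complex ^ 'n" where
  "fourier_coeff w k = (\<chi> j. LINT y:unit_cell|lebesgue.
       complex_of_real (w y $ j) * cis (- 2 * pi * (k \<bullet> y)))"

definition G_space :: "real \<Rightarrow> real ^ 'n ^ 'm \<Rightarrow> (real ^ 'm \<Rightarrow> real ^ 'n) set" where
  "G_space p R = {w \<in> Lp_per p. \<exists>lam :: real ^ 'm \<Rightarrow> complex. lam 0 = 0 \<and>
      (\<forall>k. int_vec k \<longrightarrow>
         fourier_coeff w k = lam k *s (\<chi> j. complex_of_real ((transpose R *v k) $ j)))}"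

end

theory Submission
  imports Defs
begin

(* Membership in G^p_R says that w is in L^p_# and that each Fourier coefficient \<hat>w_k lies in
   the complex line C R^* k, a closed subspace of C^n.  The map w \<mapsto> \<hat>w_k is linear, and it is
   continuous for the L^p distance because on the unit cell, which has finite measure, the L^1
   norm is dominated by the L^p norm. *)

lemma le_eps_add_powr:
  fixes t e p :: real
  assumes "0 \<le> t" "1 \<le> p" "0 < e"
  shows "t \<le> e + e powr (1 - p) * t powr p"
proof (cases "t \<le> e")
  case True
  then show ?thesis using assms by (simp add: add_increasing2)
next
  case False
  then have "0 < t" using assms by simp
  have "t = e powr (1 - p) * (e powr (p - 1) * t)"
    using assms by (simp add: powr_add[symmetric])
  also have "\<dots> \<le> e powr (1 - p) * (t powr (p - 1) * t)"
    using False assms by (intro mult_left_mono mult_right_mono powr_mono2) auto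
  also have "t powr (p - 1) * t = t powr p"
    using \<open>0 < t\<close> powr_add[of t "p - 1" 1] by simp
  finally show ?thesis using assms by simp
qed

lemma powr_add_le_two_powr:
  fixes a b p :: real
  assumes "0 \<le> a" "0 \<le> b" "0 < p"
  shows "(a + b) powr p \<le> 2 powr p * (a powr p + b powr p)"
proof -
  have "(a + b) powr p \<le> (2 * max a b) powr p" using assms by (intro powr_mono2) auto
  also have "\<dots> = 2 powr p * max a b powr p" using assms by (simp add: powr_mult)
  also have "max a b powr p \<le> a powr p + b powr p" using assms by (simp add: max_def)
  finally show ?thesis by simp
qed

lemma set_integrable_const_finite:
  assumes "A \<in> sets M" "emeasure M A < \<infinity>"
  shows "set_integrable M A (\<lambda>_. c :: real)"
  unfolding set_integrable_def using assms by (simp add: integrable_indicator_iff)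

lemma set_integrable_norm_if_powr:
  fixes f :: "'a \<Rightarrow> 'b::{banach, second_countable_topology}"
  assumes "1 \<le> p" "A \<in> sets M" "emeasure M A < \<infinity>" "f \<in> borel_measurable M"
    and "set_integrable M A (\<lambda>x. norm (f x) powr p)"
  shows "set_integrable M A (\<lambda>x. norm (f x))"
proof (rule set_integrable_bound)
  show "set_integrable M A (\<lambda>x. 1 + norm (f x) powr p)"
    using assms by (intro set_integral_add set_integrable_const_finite)
  show "set_borel_measurable M A (\<lambda>x. norm (f x))"
    unfolding set_borel_measurable_def using assms(2,4) by measurable
  show "AE x in M. x \<in> A \<longrightarrow> norm (norm (f x)) \<le> norm (1 + norm (f x) powr p)"
  proof (intro AE_I2 impI)
    fix x
    show "norm (norm (f x)) \<le> norm (1 + norm (f x) powr p)"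
      using le_eps_add_powr[of "norm (f x)" p 1] assms(1) by simp
  qed
qed

(* A crude Hoelder inequality: integrate t \<le> e + e^(1-p) t^p and take e to be the L^p norm of f. *)
lemma set_integral_norm_le_powr:
  fixes f :: "'a \<Rightarrow> 'b::{banach, second_countable_topology}"
  assumes p: "1 \<le> p" and A: "A \<in> sets M" "emeasure M A < \<infinity>" and f: "f \<in> borel_measurable M"
    and fp: "set_integrable M A (\<lambda>x. norm (f x) powr p)"
  shows "(LINT x:A|M. norm (f x)) \<le> (measure M A + 1) * (LINT x:A|M. norm (f x) powr p) powr (1 / p)"
    (is "?J \<le> (?\<mu> + 1) * ?I powr (1 / p)")
proof -
  have bound: "?J \<le> e * ?\<mu> + e powr (1 - p) * ?I" if "0 < e" for e
  proof -
    have "?J \<le> (LINT x:A|M. e + e powr (1 - p) * norm (f x) powr p)"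
      using le_eps_add_powr[OF norm_ge_zero p that] set_integrable_norm_if_powr[OF assms]
      by (intro set_integral_mono set_integral_add set_integrable_mult_right
          set_integrable_const_finite A fp) auto
    also have "\<dots> = e * ?\<mu> + e powr (1 - p) * ?I"
      using A fp by (simp add: set_integral_add set_integrable_const_finite set_integral_const
          set_integrable_mult_right)
    finally show ?thesis .
  qed
  have "0 < ?\<mu> + 1"
    using measure_nonneg[of M A] by linarith
  have "0 \<le> ?I"
    unfolding set_lebesgue_integral_def by (simp add: integral_nonneg)
  show ?thesis
  proof (cases "?I = 0")
    case True
    have "?J \<le> 0 + e" if "0 < e" for e
    proof -
      have "?J \<le> e / (?\<mu> + 1) * ?\<mu>"
        using bound[OF divide_pos_pos[OF that \<open>0 < ?\<mu> + 1\<close>]] True by simp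
      also have "\<dots> \<le> e"
        using that \<open>0 < ?\<mu> + 1\<close> by (simp add: pos_divide_le_eq)
      finally show ?thesis by simp
    qed
    then show ?thesis using True by (simp add: field_le_epsilon)
  next
    case False
    let ?d = "?I powr (1 / p)"
    have "?d powr (1 - p) * ?I = ?d powr (1 - p) * ?d powr p"
      using \<open>0 \<le> ?I\<close> p by (simp add: powr_powr)
    also have "\<dots> = ?d"
      using False by (simp add: powr_add[symmetric])
    finally have "?d powr (1 - p) * ?I = ?d" .
    then show ?thesis using bound[of ?d] False \<open>0 \<le> ?I\<close> by (simp add: algebra_simps)
  qed
qed

lemma sets_lebesgue_unit_cell: "(unit_cell :: (real^'m) set) \<in> sets lebesgue"
proof -
  have "{y::real^'m. 0 \<le> y $ i \<and> y $ i < 1} \<in> sets borel" for i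
    using closed_halfspace_component_ge_cart open_halfspace_component_lt_cart
    by (simp add: Collect_conj_eq sets.Int borel_closed borel_open)
  then have "(\<Inter>i. {y::real^'m. 0 \<le> y $ i \<and> y $ i < 1}) \<in> sets lebesgue"
    by (intro sets_completionI_sets sets.finite_INT) auto
  moreover have "unit_cell = (\<Inter>i. {y::real^'m. 0 \<le> y $ i \<and> y $ i < 1})"
    unfolding unit_cell_def by auto
  ultimately show ?thesis by simp
qed

lemma emeasure_unit_cell_finite: "emeasure lebesgue (unit_cell :: (real^'m) set) < \<infinity>"
proof -
  have "unit_cell \<subseteq> cbox (0::real^'m) (\<chi> i. 1)"
    unfolding unit_cell_def by (auto simp: mem_box_cart less_imp_le)
  then have "emeasure lebesgue (unit_cell :: (real^'m) set)
      \<le> emeasure lebesgue (cbox (0::real^'m) (\<chi> i. 1))"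
    by (intro emeasure_mono) auto
  also have "\<dots> < \<infinity>" using emeasure_lborel_cbox_finite by simp
  finally show ?thesis .
qed

lemma Lp_perD:
  assumes "w \<in> Lp_per p"
  shows "w \<in> borel_measurable lebesgue" "int_vec z \<Longrightarrow> w (y + z) = w y"
    and "set_integrable lebesgue unit_cell (\<lambda>y. norm (w y) powr p)"
  using assms unfolding Lp_per_def by blast+

lemma Lp_per_zero: "(\<lambda>_. 0) \<in> Lp_per p"
  unfolding Lp_per_def set_integrable_def by simp

lemma Lp_per_scaleR:
  assumes "u \<in> Lp_per p"
  shows "(\<lambda>y. c *\<^sub>R u y) \<in> Lp_per p"
proof -
  have "set_integrable lebesgue unit_cell (\<lambda>y. \<bar>c\<bar> powr p * norm (u y) powr p)"
    using Lp_perD(3)[OF assms] by (rule set_integrable_mult_right)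
  then show ?thesis
    using Lp_perD(1,2)[OF assms] unfolding Lp_per_def by (simp add: powr_mult)
qed

lemma Lp_per_add:
  assumes u: "u \<in> Lp_per p" and v: "v \<in> Lp_per p" and "0 < p"
  shows "(\<lambda>y. u y + v y) \<in> Lp_per p"
proof -
  have "set_integrable lebesgue unit_cell (\<lambda>y. norm (u y + v y) powr p)"
  proof (rule set_integrable_bound)
    show "set_integrable lebesgue unit_cell (\<lambda>y. 2 powr p * (norm (u y) powr p + norm (v y) powr p))"
      using Lp_perD(3)[OF u] Lp_perD(3)[OF v] by (intro set_integrable_mult_right set_integral_add)
    show "set_borel_measurable lebesgue unit_cell (\<lambda>y. norm (u y + v y) powr p)"
      unfolding set_borel_measurable_def
      using Lp_perD(1)[OF u] Lp_perD(1)[OF v] sets_lebesgue_unit_cell by measurable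
    have "norm (u y + v y) powr p \<le> 2 powr p * (norm (u y) powr p + norm (v y) powr p)" for y
      using powr_mono2[OF less_imp_le[OF \<open>0 < p\<close>] norm_ge_zero norm_triangle_ineq[of "u y" "v y"]]
        powr_add_le_two_powr[OF norm_ge_zero norm_ge_zero \<open>0 < p\<close>, of "u y" "v y"]
      by linarith
    then show "AE y in lebesgue. y \<in> unit_cell \<longrightarrow>
        norm (norm (u y + v y) powr p) \<le> norm (2 powr p * (norm (u y) powr p + norm (v y) powr p))"
      by (intro AE_I2) simp
  qed
  then show ?thesis
    using Lp_perD(1,2)[OF u] Lp_perD(1,2)[OF v] unfolding Lp_per_def by simp
qed

lemma Lp_per_diff:
  assumes "u \<in> Lp_per p" "v \<in> Lp_per p" "0 < p"
  shows "(\<lambda>y. u y - v y) \<in> Lp_per p"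
  using Lp_per_add[OF assms(1) Lp_per_scaleR[OF assms(2), of "-1"] assms(3)] by simp

lemma set_integrable_norm_Lp_per:
  assumes "w \<in> Lp_per p" "1 \<le> p"
  shows "set_integrable lebesgue unit_cell (\<lambda>y. norm (w y))"
  using set_integrable_norm_if_powr[OF assms(2) sets_lebesgue_unit_cell emeasure_unit_cell_finite
      Lp_perD(1,3)[OF assms(1)]] .

lemma L1_dist_le_Lp_dist:
  fixes u v :: "real^'m \<Rightarrow> real^'n"
  assumes "u \<in> Lp_per p" "v \<in> Lp_per p" "1 \<le> p"
  shows "(LINT y:unit_cell|lebesgue. norm (u y - v y))
    \<le> (measure lebesgue (unit_cell :: (real^'m) set) + 1) * Lp_dist p u v"
proof -
  have diff: "(\<lambda>y. u y - v y) \<in> Lp_per p"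
    using Lp_per_diff[OF assms(1,2)] assms(3) by simp
  show ?thesis
    unfolding Lp_dist_def
    by (rule set_integral_norm_le_powr[OF assms(3) sets_lebesgue_unit_cell emeasure_unit_cell_finite
          Lp_perD(1,3)[OF diff]])
qed

lemma set_integrable_fourier_integrand:
  assumes "w \<in> Lp_per p" "1 \<le> p"
  shows "set_integrable lebesgue unit_cell (\<lambda>y. complex_of_real (w y $ j) * cis (- 2 * pi * (k \<bullet> y)))"
proof (rule set_integrable_bound[OF set_integrable_norm_Lp_per[OF assms]])
  have "(\<lambda>y. w y $ j) \<in> borel_measurable lebesgue"
    using measurable_compose[OF Lp_perD(1)[OF assms(1)] borel_measurable_nth] .
  moreover have "(\<lambda>y. cis (- 2 * pi * (k \<bullet> y))) \<in> borel_measurable lebesgue"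
    using borel_measurable_continuous_on[OF _ id_borel_measurable_lebesgue,
        of "\<lambda>y. cis (- 2 * pi * (k \<bullet> y))"]
    by (simp add: continuous_on_cis continuous_intros)
  ultimately have "(\<lambda>y. complex_of_real (w y $ j) * cis (- 2 * pi * (k \<bullet> y)))
      \<in> borel_measurable lebesgue"
    by measurable
  then show "set_borel_measurable lebesgue unit_cell
      (\<lambda>y. complex_of_real (w y $ j) * cis (- 2 * pi * (k \<bullet> y)))"
    unfolding set_borel_measurable_def
    by (intro borel_measurable_scaleR borel_measurable_indicator sets_lebesgue_unit_cell)
  show "AE y in lebesgue. y \<in> unit_cell \<longrightarrow>
      norm (complex_of_real (w y $ j) * cis (- 2 * pi * (k \<bullet> y))) \<le> norm (norm (w y))"
    by (intro AE_I2) (simp add: norm_mult component_le_norm_cart)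
qed

lemma fourier_coeff_zero: "fourier_coeff (\<lambda>_. 0) k = 0"
  unfolding fourier_coeff_def by (simp add: vec_eq_iff)

lemma fourier_coeff_scaleR: "fourier_coeff (\<lambda>y. c *\<^sub>R u y) k = complex_of_real c *s fourier_coeff u k"
  unfolding fourier_coeff_def by (simp add: vec_eq_iff mult.assoc)

lemma fourier_coeff_add:
  assumes "u \<in> Lp_per p" "v \<in> Lp_per p" "1 \<le> p"
  shows "fourier_coeff (\<lambda>y. u y + v y) k = fourier_coeff u k + fourier_coeff v k"
  unfolding fourier_coeff_def
  using set_integrable_fourier_integrand[OF assms(1,3)] set_integrable_fourier_integrand[OF assms(2,3)]
  by (simp add: vec_eq_iff distrib_right)

lemma fourier_coeff_diff:
  assumes "u \<in> Lp_per p" "v \<in> Lp_per p" "1 \<le> p"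
  shows "fourier_coeff (\<lambda>y. u y - v y) k = fourier_coeff u k - fourier_coeff v k"
  unfolding fourier_coeff_def
  using set_integrable_fourier_integrand[OF assms(1,3)] set_integrable_fourier_integrand[OF assms(2,3)]
  by (simp add: vec_eq_iff left_diff_distrib)

lemma norm_fourier_coeff_nth_le:
  assumes "w \<in> Lp_per p" "1 \<le> p"
  shows "norm (fourier_coeff w k $ j) \<le> (LINT y:unit_cell|lebesgue. norm (w y))"
proof -
  have "norm (fourier_coeff w k $ j)
      \<le> (LINT y:unit_cell|lebesgue. norm (complex_of_real (w y $ j) * cis (- 2 * pi * (k \<bullet> y))))"
    unfolding fourier_coeff_def vec_lambda_beta
    by (intro set_integral_norm_bound set_integrable_fourier_integrand[OF assms])
  also have "\<dots> \<le> (LINT y:unit_cell|lebesgue. norm (w y))"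
    by (rule set_integral_mono[OF set_integrable_norm[OF set_integrable_fourier_integrand[OF assms]]
          set_integrable_norm_Lp_per[OF assms]]) (simp add: norm_mult component_le_norm_cart)
  finally show ?thesis .
qed

lemma tendsto_fourier_coeff:
  fixes ws :: "nat \<Rightarrow> real^'m \<Rightarrow> real^'n"
  assumes ws: "\<And>j. ws j \<in> Lp_per p" and w: "w \<in> Lp_per p" and p: "1 \<le> p"
    and lim: "(\<lambda>j. Lp_dist p (ws j) w) \<longlonglongrightarrow> 0"
  shows "(\<lambda>j. fourier_coeff (ws j) k) \<longlonglongrightarrow> fourier_coeff w k"
proof (rule vec_tendstoI, rule LIM_zero_cancel)
  fix i
  let ?C = "measure lebesgue (unit_cell :: (real^'m) set) + 1"
  have bound: "norm (fourier_coeff (ws j) k $ i - fourier_coeff w k $ i) \<le> ?C * Lp_dist p (ws j) w"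
    for j
  proof -
    have "norm (fourier_coeff (ws j) k $ i - fourier_coeff w k $ i)
        = norm (fourier_coeff (\<lambda>y. ws j y - w y) k $ i)"
      by (simp add: fourier_coeff_diff[OF ws w p])
    also have "\<dots> \<le> (LINT y:unit_cell|lebesgue. norm (ws j y - w y))"
      using Lp_per_diff[OF ws w] p by (intro norm_fourier_coeff_nth_le[OF _ p]) simp
    also have "\<dots> \<le> ?C * Lp_dist p (ws j) w"
      by (rule L1_dist_le_Lp_dist[OF ws w p])
    finally show ?thesis .
  qed
  show "(\<lambda>j. fourier_coeff (ws j) k $ i - fourier_coeff w k $ i) \<longlonglongrightarrow> 0"
    by (rule Lim_null_comparison[OF always_eventually[OF allI[OF bound]]
          tendsto_mult_right_zero[OF lim]])
qed

definition complex_line :: "complex^'n \<Rightarrow> (complex^'n) set" where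
  "complex_line v = range (\<lambda>c. c *s v)"

lemma subspace_complex_line: "subspace (complex_line v)"
proof (rule real_vector.subspaceI)
  show "0 \<in> complex_line v"
    unfolding complex_line_def by (rule range_eqI[where x=0]) (simp add: vec_eq_iff)
  show "x + y \<in> complex_line v" if "x \<in> complex_line v" "y \<in> complex_line v" for x y
    using that unfolding complex_line_def by (auto simp flip: vector_sadd_rdistrib)
  show "r *\<^sub>R x \<in> complex_line v" if x: "x \<in> complex_line v" for r x
  proof -
    obtain c where "x = c *s v"
      using x unfolding complex_line_def by blast
    then have "r *\<^sub>R x = (of_real r * c) *s v"
      by (simp add: vec_eq_iff) (simp add: scaleR_conv_of_real)
    then show ?thesis
      unfolding complex_line_def by blast
  qed
qed

lemma closed_complex_line: "closed (complex_line v)"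
  by (rule closed_subspace[OF subspace_complex_line])

lemma smult_in_complex_line: "c *s v \<in> complex_line v"
  unfolding complex_line_def by (rule rangeI)

lemma smult_mem_complex_line: "x \<in> complex_line v \<Longrightarrow> c *s x \<in> complex_line v"
  unfolding complex_line_def by (auto simp: vector_smult_assoc)

lemma mem_G_space_iff:
  "w \<in> G_space p R \<longleftrightarrow> w \<in> Lp_per p \<and> (\<forall>k. int_vec k \<longrightarrow>
     fourier_coeff w k \<in> complex_line (\<chi> j. complex_of_real ((transpose R *v k) $ j)))"
  (is "_ \<longleftrightarrow> _ \<and> (\<forall>k. int_vec k \<longrightarrow> fourier_coeff w k \<in> complex_line (?V k))")
proof
  assume "w \<in> G_space p R"
  then obtain lam where "w \<in> Lp_per p" "\<And>k. int_vec k \<Longrightarrow> fourier_coeff w k = lam k *s ?V k"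
    unfolding G_space_def by blast
  then show "w \<in> Lp_per p \<and> (\<forall>k. int_vec k \<longrightarrow> fourier_coeff w k \<in> complex_line (?V k))"
    by (simp add: smult_in_complex_line)
next
  assume w: "w \<in> Lp_per p \<and> (\<forall>k. int_vec k \<longrightarrow> fourier_coeff w k \<in> complex_line (?V k))"
  then have ex: "\<exists>c. fourier_coeff w k = c *s ?V k" if "int_vec k" for k
    using that unfolding complex_line_def by blast
  define lam where "lam k = (if k = 0 then 0 else SOME c. fourier_coeff w k = c *s ?V k)" for k
  have "fourier_coeff w k = lam k *s ?V k" if "int_vec k" for k
  proof (cases "k = 0")
    case True
    have "?V 0 = 0"
      by (simp add: vec_eq_iff)
    then show ?thesis
      using ex[OF that] True by (simp add: lam_def)
  next
    case False
    then show ?thesis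
      using someI_ex[OF ex[OF that]] by (simp add: lam_def)
  qed
  moreover have "lam 0 = 0"
    by (simp add: lam_def)
  ultimately show "w \<in> G_space p R"
    using w unfolding G_space_def by blast
qed

lemma G_space_zero: "(\<lambda>_. 0) \<in> G_space p R"
  by (simp add: mem_G_space_iff Lp_per_zero fourier_coeff_zero
      real_vector.subspace_0[OF subspace_complex_line])

lemma G_space_add:
  fixes R :: "real^'n^'m"
  assumes u: "u \<in> G_space p R" and v: "v \<in> G_space p R" and p: "1 \<le> p"
  shows "(\<lambda>y. u y + v y) \<in> G_space p R"
  unfolding mem_G_space_iff
proof (intro conjI allI impI)
  show "(\<lambda>y. u y + v y) \<in> Lp_per p"
    using u v p by (simp add: mem_G_space_iff Lp_per_add)
  fix k :: "real^'m"
  assume "int_vec k"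
  then have "fourier_coeff u k + fourier_coeff v k
      \<in> complex_line (\<chi> j. complex_of_real ((transpose R *v k) $ j))"
    using u v
    by (intro real_vector.subspace_add[OF subspace_complex_line]) (simp_all add: mem_G_space_iff)
  moreover have "u \<in> Lp_per p" "v \<in> Lp_per p"
    using u v by (simp_all add: mem_G_space_iff)
  ultimately show "fourier_coeff (\<lambda>y. u y + v y) k
      \<in> complex_line (\<chi> j. complex_of_real ((transpose R *v k) $ j))"
    using p by (simp add: fourier_coeff_add)
qed

lemma G_space_scaleR:
  assumes "u \<in> G_space p R"
  shows "(\<lambda>y. c *\<^sub>R u y) \<in> G_space p R"
  using assms by (simp add: mem_G_space_iff Lp_per_scaleR fourier_coeff_scaleR smult_mem_complex_line)

lemma G_space_closed_sequentially:
  fixes R :: "real^'n^'m"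
  assumes p: "1 \<le> p" and ws: "\<And>j. ws j \<in> G_space p R" and w: "w \<in> Lp_per p"
    and lim: "(\<lambda>j. Lp_dist p (ws j) w) \<longlonglongrightarrow> 0"
  shows "w \<in> G_space p R"
  unfolding mem_G_space_iff
proof (intro conjI allI impI w)
  fix k :: "real^'m"
  assume "int_vec k"
  have "ws j \<in> Lp_per p" for j
    using ws by (simp add: mem_G_space_iff)
  then show "fourier_coeff w k \<in> complex_line (\<chi> j. complex_of_real ((transpose R *v k) $ j))"
    using ws \<open>int_vec k\<close>
    by (intro closed_sequentially[OF closed_complex_line _ tendsto_fourier_coeff[OF _ w p lim]])
      (simp_all add: mem_G_space_iff)
qed

theorem lemma5p3:
  fixes p :: real and R :: "real ^ 'n ^ 'm"
  assumes "CARD('n) < CARD('m)"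
    and "1 < p"
    and "\<forall>k. int_vec k \<and> k \<noteq> 0 \<longrightarrow> transpose R *v k \<noteq> 0"
  shows "G_space p R \<subseteq> Lp_per p
    \<and> (\<lambda>_. 0) \<in> G_space p R
    \<and> (\<forall>u \<in> G_space p R. \<forall>v \<in> G_space p R. (\<lambda>y. u y + v y) \<in> G_space p R)
    \<and> (\<forall>c::real. \<forall>u \<in> G_space p R. (\<lambda>y. c *\<^sub>R u y) \<in> G_space p R)
    \<and> (\<forall>ws w. (\<forall>j::nat. ws j \<in> G_space p R) \<longrightarrow> w \<in> Lp_per p
         \<longrightarrow> (\<lambda>j. Lp_dist p (ws j) w) \<longlonglongrightarrow> 0 \<longrightarrow> w \<in> G_space p R)"
proof -
  have p: "1 \<le> p"
    using \<open>1 < p\<close> by simp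
  have "G_space p R \<subseteq> Lp_per p"
    by (auto simp: mem_G_space_iff)
  moreover have "(\<lambda>_. 0) \<in> G_space p R"
    by (rule G_space_zero)
  moreover have "\<forall>u \<in> G_space p R. \<forall>v \<in> G_space p R. (\<lambda>y. u y + v y) \<in> G_space p R"
    using G_space_add[OF _ _ p] by blast
  moreover have "\<forall>c::real. \<forall>u \<in> G_space p R. (\<lambda>y. c *\<^sub>R u y) \<in> G_space p R"
    using G_space_scaleR by blast
  moreover have "\<forall>ws w. (\<forall>j::nat. ws j \<in> G_space p R) \<longrightarrow> w \<in> Lp_per p
      \<longrightarrow> (\<lambda>j. Lp_dist p (ws j) w) \<longlonglongrightarrow> 0 \<longrightarrow> w \<in> G_space p R"
    using G_space_closed_sequentially[OF p] by blast
  ultimately show ?thesis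
    by blast
qed

end
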